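(* Let $c\in\mathbb{Z}^n$ be a point with at least one positive and at least one negative coordinate. Then there exists a basis $\xi_1,\dots,\xi_n$ of the vector space $\mathbb{R}^n$ such that $\xi_i\in\mathbb{Z}^n_{\ge0}$ for $i=1,\dots,n$ and $\langle\xi_i,c\rangle=0$ for $i=1,\dots,n-1$.
   Context: $\langle\cdot,\cdot\rangle$ denotes the standard scalar product. *)

theory Defs
  imports "HOL-Analysis.Analysis"
begin

end

theory Submission
  imports Defs
begin

text \<open>Pick coordinates \<open>p\<close>, \<open>q\<close> with \<open>c\<^sub>p > 0 > c\<^sub>q\<close>. Every coordinate \<open>j \<noteq> p\<close> can be
  paired with \<open>p\<close> or \<open>q\<close> (whichever carries the sign opposite to \<open>c\<^sub>j\<close>) to give a nonnegative
  integer vector orthogonal to \<open>c\<close>; together with \<open>e\<^sub>p\<close> these \<open>n\<close> vectors span \<open>\<real>\<^sup>n\<close>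
  by a triangular elimination, hence form a basis with \<open>e\<^sub>p\<close> listed last.\<close>

definition kernel_vec :: "real ^ 'n \<Rightarrow> 'n \<Rightarrow> 'n \<Rightarrow> 'n \<Rightarrow> real ^ 'n" where
  "kernel_vec c p q j =
     (if j = p then axis p 1
      else if j = q then (- c $ q) *\<^sub>R axis p 1 + c $ p *\<^sub>R axis q 1
      else if c $ j \<ge> 0 then c $ j *\<^sub>R axis q 1 + (- c $ q) *\<^sub>R axis j 1
      else (- c $ j) *\<^sub>R axis p 1 + c $ p *\<^sub>R axis j 1)"

lemma kernel_vec_orthogonal:
  assumes "j \<noteq> p"
  shows "kernel_vec c p q j \<bullet> c = 0"
  using assms by (auto simp: kernel_vec_def inner_axis' inner_add_left algebra_simps)

lemma kernel_vec_nonneg: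
  assumes "c $ p \<ge> 0" "c $ q \<le> 0"
  shows "kernel_vec c p q j $ k \<ge> 0"
  using assms by (auto simp: kernel_vec_def axis_def)

lemma kernel_vec_Ints:
  assumes "\<forall>j. c $ j \<in> \<int>"
  shows "kernel_vec c p q j $ k \<in> \<int>"
  using assms by (auto simp: kernel_vec_def axis_def)

lemma span_range_kernel_vec:
  assumes "c $ p \<noteq> 0" "c $ q \<noteq> 0" "p \<noteq> q"
  shows "span (range (kernel_vec c p q)) = UNIV"
proof -
  let ?g = "kernel_vec c p q"
  have g: "?g j \<in> span (range ?g)" for j
    by (simp add: span_base)
  have ep: "axis p 1 \<in> span (range ?g)"
    using g[of p] by (simp add: kernel_vec_def)
  have eq: "axis q 1 \<in> span (range ?g)"
  proof -
    have "axis q 1 = (1 / c $ p) *\<^sub>R (?g q - (- c $ q) *\<^sub>R axis p 1)"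
      using assms by (simp add: kernel_vec_def)
    then show ?thesis
      using ep g by (metis span_diff span_scale)
  qed
  have "axis j 1 \<in> span (range ?g)" for j
  proof (cases "j = p \<or> j = q")
    case True
    then show ?thesis using ep eq by auto
  next
    case False
    show ?thesis
    proof (cases "c $ j \<ge> 0")
      case True
      have "axis j 1 = (1 / - c $ q) *\<^sub>R (?g j - c $ j *\<^sub>R axis q 1)"
        using assms False True by (simp add: kernel_vec_def)
      then show ?thesis using eq g by (metis span_diff span_scale)
    next
      case neg: False
      have "axis j 1 = (1 / c $ p) *\<^sub>R (?g j - (- c $ j) *\<^sub>R axis p 1)"
        using assms False neg by (simp add: kernel_vec_def)
      then show ?thesis using ep g by (metis span_diff span_scale)
    qed
  qed
  then have "Basis \<subseteq> span (range ?g)"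
    using axis_inverse by blast
  then show ?thesis
    by (metis span_Basis span_minimal subspace_span top_le)
qed

lemma spanning_family_of_dim_size_is_basis:
  fixes \<xi> :: "nat \<Rightarrow> 'a::euclidean_space"
  assumes "finite A" "card A = DIM('a)" "span (\<xi> ` A) = UNIV"
  shows "inj_on \<xi> A \<and> independent (\<xi> ` A)"
proof -
  have "DIM('a) \<le> card (\<xi> ` A)"
    using span_card_ge_dim[of "\<xi> ` A" UNIV] assms by simp
  moreover have "card (\<xi> ` A) \<le> card A"
    using card_image_le assms(1) by blast
  ultimately have "card (\<xi> ` A) = card A"
    using assms(2) by linarith
  then show ?thesis
    using card_le_dim_spanning[of "\<xi> ` A" UNIV] assms
    by (simp add: eq_card_imp_inj_on)
qed

lemma enumeration_with_last:
  fixes g :: "'n::finite \<Rightarrow> 'a"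
  obtains \<xi> :: "nat \<Rightarrow> 'a"
  where "\<xi> ` {1..CARD('n)} = range g"
    and "\<And>i. i \<in> {1..CARD('n) - 1} \<Longrightarrow> \<exists>j. j \<noteq> p \<and> \<xi> i = g j"
proof -
  let ?I = "{1..CARD('n) - 1}"
  have "card (UNIV - {p}) = CARD('n) - 1"
    by (simp add: card_Diff_singleton)
  then obtain h where h: "bij_betw h ?I (UNIV - {p})"
    using ex_bij_betw_nat_finite_1[of "UNIV - {p}"] by auto
  define \<xi> where "\<xi> i = (if i = CARD('n) then g p else g (h i))" for i
  have \<xi>_I: "\<xi> i = g (h i)" if "i \<in> ?I" for i
  proof -
    have "i \<noteq> CARD('n)"
      using that atLeastAtMost_iff[of i 1 "CARD('n) - 1"] by linarith
    then show ?thesis by (simp add: \<xi>_def)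
  qed
  have "{1..CARD('n)} = insert (CARD('n)) ?I"
    using zero_less_card_finite[where 'a='n] by auto
  moreover have "\<xi> ` ?I = g ` h ` ?I"
    unfolding image_image by (rule image_cong) (simp_all add: \<xi>_I)
  moreover have "\<xi> (CARD('n)) = g p"
    by (simp add: \<xi>_def)
  ultimately have "\<xi> ` {1..CARD('n)} = insert (g p) (g ` h ` ?I)"
    by (simp only: image_insert)
  also have "\<dots> = range g"
    using bij_betw_imp_surj_on[OF h] by auto
  finally show ?thesis
    using that \<xi>_I bij_betw_apply[OF h] by blast
qed

theorem lemma2p3:
  fixes c :: "real ^ 'n"
  assumes cint: "\<forall>j. c $ j \<in> \<int>"
    and pos: "\<exists>j. c $ j > 0"
    and neg: "\<exists>j. c $ j < 0"
  shows "\<exists>\<xi> :: nat \<Rightarrow> real ^ 'n.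
           inj_on \<xi> {1..CARD('n)} \<and>
           independent (\<xi> ` {1..CARD('n)}) \<and>
           span (\<xi> ` {1..CARD('n)}) = UNIV \<and>
           (\<forall>i\<in>{1..CARD('n)}. \<forall>j. \<xi> i $ j \<in> \<int> \<and> \<xi> i $ j \<ge> 0) \<and>
           (\<forall>i\<in>{1..CARD('n) - 1}. \<xi> i \<bullet> c = 0)"
proof -
  obtain p q where p: "c $ p > 0" and q: "c $ q < 0"
    using pos neg by blast
  then have "p \<noteq> q" by auto
  obtain \<xi> where \<xi>: "\<xi> ` {1..CARD('n)} = range (kernel_vec c p q)"
    and orth: "\<And>i. i \<in> {1..CARD('n) - 1} \<Longrightarrow> \<exists>j. j \<noteq> p \<and> \<xi> i = kernel_vec c p q j"
    using enumeration_with_last[of "kernel_vec c p q" p] by blast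
  have span: "span (\<xi> ` {1..CARD('n)}) = UNIV"
    using span_range_kernel_vec[of c p q] p q \<open>p \<noteq> q\<close> \<xi> by simp
  moreover have "inj_on \<xi> {1..CARD('n)} \<and> independent (\<xi> ` {1..CARD('n)})"
    by (rule spanning_family_of_dim_size_is_basis[OF _ _ span]) simp_all
  moreover have "\<forall>i\<in>{1..CARD('n)}. \<forall>j. \<xi> i $ j \<in> \<int> \<and> \<xi> i $ j \<ge> 0"
  proof (intro ballI allI)
    fix i j assume "i \<in> {1..CARD('n)}"
    then obtain k where "\<xi> i = kernel_vec c p q k"
      using \<xi> by blast
    then show "\<xi> i $ j \<in> \<int> \<and> \<xi> i $ j \<ge> 0"
      using kernel_vec_Ints[OF cint] kernel_vec_nonneg[of c p q] p q by simp
  qed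
  moreover have "\<forall>i\<in>{1..CARD('n) - 1}. \<xi> i \<bullet> c = 0"
  proof
    fix i assume "i \<in> {1..CARD('n) - 1}"
    then obtain j where "j \<noteq> p" "\<xi> i = kernel_vec c p q j"
      using orth by blast
    then show "\<xi> i \<bullet> c = 0"
      by (simp add: kernel_vec_orthogonal)
  qed
  ultimately show ?thesis
    by (intro exI[of _ \<xi>]) simp
qed

end
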